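(* Let $(a,D)$ be a weak hyperoperator on $\mathbb{R}$ in the complex Banach space $X$, and assume that for each $z\in\mathbb{C}\setminus\mathbb{R}$ the closure of $r_z(a)$ is a bounded operator on $X$, where $r_z(\xi)=1/(z-\xi)$. Then the closure $\bar a$ of $a$ has real spectrum in the usual sense, i.e. every $z\in\mathbb{C}\setminus\mathbb{R}$ belongs to the resolvent set of $\bar a$.
   Context: $X$ is a complex Banach space. $\mathcal{E}(\mathbb{R})=C^\infty(\mathbb{R})$ (complex-valued) with the topology of uniform convergence of all derivatives on compacts; $r_z\in\mathcal{E}(\mathbb{R})$ for $z\notin\mathbb{R}$. For a dense subspace $D\subset X$, $\mathbf{L}(D)$ is the set of closable linear operators $D\to D$. A weak hyperoperator $(a,D)$ on $\mathbb{R}$ is a linear operator $a:D\to D$, $D$ dense, $a$ closable, together with a linear multiplicative map $\mathcal{E}(\mathbb{R})\to\mathbf{L}(D)$, $h\mapsto h(a)$, sending each polynomial $p$ to $p(a)$, such that $h_k(a)x\to h(a)x$ for all $x\in D$ whenever $h_k\to h$ in $\mathcal{E}(\mathbb{R})$. *)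

theory Defs
  imports "HOL-Analysis.Analysis" "HOL-Computational_Algebra.Polynomial"
begin

text \<open>A complex Banach space
  is modelled as a real Banach space 'x together with a complex scalar multiplication
  sc extending the real one and satisfying the vector-space and norm axioms.\<close>

definition cbanach :: "(complex \<Rightarrow> 'x::banach \<Rightarrow> 'x) \<Rightarrow> bool" where
  "cbanach sc \<longleftrightarrow>
     (\<forall>r x. sc (complex_of_real r) x = r *\<^sub>R x) \<and>
     (\<forall>c d x. sc (c * d) x = sc c (sc d x)) \<and>
     (\<forall>c d x. sc (c + d) x = sc c x + sc d x) \<and>
     (\<forall>c x y. sc c (x + y) = sc c x + sc c y) \<and>
     (\<forall>c x. norm (sc c x) = cmod c * norm x)"

definition csubspace :: "(complex \<Rightarrow> 'x::banach \<Rightarrow> 'x) \<Rightarrow> 'x set \<Rightarrow> bool" where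
  "csubspace sc D \<longleftrightarrow> 0 \<in> D \<and> (\<forall>x\<in>D. \<forall>y\<in>D. x + y \<in> D) \<and> (\<forall>c. \<forall>x\<in>D. sc c x \<in> D)"

definition graph :: "'x set \<Rightarrow> ('x \<Rightarrow> 'x) \<Rightarrow> ('x \<times> 'x) set" where
  "graph D a = {(x, a x) | x. x \<in> D}"

definition op_closure :: "'x::banach set \<Rightarrow> ('x \<Rightarrow> 'x) \<Rightarrow> ('x \<times> 'x) set" where
  "op_closure D a = closure (graph D a)"

definition closable :: "'x::banach set \<Rightarrow> ('x \<Rightarrow> 'x) \<Rightarrow> bool" where
  "closable D a \<longleftrightarrow> (\<forall>y. (0, y) \<in> op_closure D a \<longrightarrow> y = 0)"

definition clinear_on :: "(complex \<Rightarrow> 'x::banach \<Rightarrow> 'x) \<Rightarrow> 'x set \<Rightarrow> ('x \<Rightarrow> 'x) \<Rightarrow> bool" where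
  "clinear_on sc D a \<longleftrightarrow> (\<forall>x\<in>D. a x \<in> D) \<and>
     (\<forall>x\<in>D. \<forall>y\<in>D. a (x + y) = a x + a y) \<and> (\<forall>c. \<forall>x\<in>D. a (sc c x) = sc c (a x))"

definition in_LD :: "(complex \<Rightarrow> 'x::banach \<Rightarrow> 'x) \<Rightarrow> 'x set \<Rightarrow> ('x \<Rightarrow> 'x) \<Rightarrow> bool" where
  "in_LD sc D a \<longleftrightarrow> clinear_on sc D a \<and> closable D a"

primrec hder :: "nat \<Rightarrow> (real \<Rightarrow> complex) \<Rightarrow> real \<Rightarrow> complex" where
  "hder 0 h = h"
| "hder (Suc n) h = (\<lambda>t. vector_derivative (hder n h) (at t))"

definition smooth :: "(real \<Rightarrow> complex) \<Rightarrow> bool" where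
  "smooth h \<longleftrightarrow> (\<forall>n t. hder n h differentiable (at t))"

text \<open>Convergence in E(R): uniform convergence of all derivatives on compacts
  (every compact subset of R lies in some interval [-M, M]).\<close>
definition convE :: "(nat \<Rightarrow> real \<Rightarrow> complex) \<Rightarrow> (real \<Rightarrow> complex) \<Rightarrow> bool" where
  "convE hs h \<longleftrightarrow> (\<forall>n M. uniform_limit {-M..M} (\<lambda>k. hder n (hs k)) (hder n h) sequentially)"

definition poly_op :: "(complex \<Rightarrow> 'x::banach \<Rightarrow> 'x) \<Rightarrow> complex poly \<Rightarrow> ('x \<Rightarrow> 'x) \<Rightarrow> 'x \<Rightarrow> 'x" where
  "poly_op sc p a x = (\<Sum>i\<le>degree p. sc (coeff p i) ((a ^^ i) x))"

definition weak_hyperop ::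
  "(complex \<Rightarrow> 'x::banach \<Rightarrow> 'x) \<Rightarrow> 'x set \<Rightarrow> ('x \<Rightarrow> 'x) \<Rightarrow> ((real \<Rightarrow> complex) \<Rightarrow> 'x \<Rightarrow> 'x) \<Rightarrow> bool" where
  "weak_hyperop sc D a F \<longleftrightarrow>
     csubspace sc D \<and> closure D = UNIV \<and> in_LD sc D a \<and>
     (\<forall>h. smooth h \<longrightarrow> in_LD sc D (F h)) \<and>
     (\<forall>h g. smooth h \<longrightarrow> smooth g \<longrightarrow> (\<forall>x\<in>D. F (\<lambda>t. h t + g t) x = F h x + F g x)) \<and>
     (\<forall>h c. smooth h \<longrightarrow> (\<forall>x\<in>D. F (\<lambda>t. c * h t) x = sc c (F h x))) \<and>
     (\<forall>h g. smooth h \<longrightarrow> smooth g \<longrightarrow> (\<forall>x\<in>D. F (\<lambda>t. h t * g t) x = F h (F g x))) \<and>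
     (\<forall>p. \<forall>x\<in>D. F (\<lambda>t. poly p (complex_of_real t)) x = poly_op sc p a x) \<and>
     (\<forall>hs h. (\<forall>k. smooth (hs k)) \<longrightarrow> smooth h \<longrightarrow> convE hs h \<longrightarrow>
        (\<forall>x\<in>D. (\<lambda>k. F (hs k) x) \<longlonglongrightarrow> F h x))"

definition rz :: "complex \<Rightarrow> real \<Rightarrow> complex" where
  "rz z = (\<lambda>t. 1 / (z - complex_of_real t))"

text \<open>z lies in the resolvent set of the (closed) operator with graph G:
  z - T : dom T \<rightarrow> X is bijective with bounded inverse R.\<close>
definition in_resolvent :: "(complex \<Rightarrow> 'x::banach \<Rightarrow> 'x) \<Rightarrow> ('x \<times> 'x) set \<Rightarrow> complex \<Rightarrow> bool" where
  "in_resolvent sc G z \<longleftrightarrow> (\<exists>R. bounded_linear R \<and>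
      (\<forall>w. (R w, sc z (R w) - w) \<in> G) \<and>
      (\<forall>x y. (x, y) \<in> G \<longrightarrow> R (sc z x - y) = x))"

end

theory Submission
  imports Defs
begin

text \<open>For non-real z the function \<open>z - t\<close> is smooth and \<open>r\<^sub>z\<close> is its smooth reciprocal,
  so multiplicativity of the calculus makes \<open>r\<^sub>z(a)\<close>, whose closure is the bounded operator B,
  a two-sided inverse of \<open>z - a\<close> on D.  Since B is continuous and D is dense, both identities
  pass to the closure of the graph of a.\<close>

lemma cbanach_scale_one:
  assumes "cbanach sc"
  shows "sc 1 x = x"
  using assms[unfolded cbanach_def] by (metis of_real_1 scaleR_one)

lemma cbanach_scale_minus_one:
  assumes "cbanach sc"
  shows "sc (-1) x = - x"
  using assms[unfolded cbanach_def] by (metis of_real_1 of_real_minus scaleR_minus1_left)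

lemma cbanach_bounded_linear:
  assumes "cbanach sc"
  shows "bounded_linear (sc c)"
proof (rule bounded_linear_intro[where K = "cmod c"])
  note cb = assms[unfolded cbanach_def]
  show "sc c (x + y) = sc c x + sc c y" for x y
    using cb by blast
  show "sc c (r *\<^sub>R x) = r *\<^sub>R sc c x" for r x
    using cb by (metis mult.commute)
  show "norm (sc c x) \<le> norm x * cmod c" for x
    using cb by (simp add: mult.commute)
qed

lemma graph_subset_op_closure: "graph D a \<subseteq> op_closure D a"
  unfolding op_closure_def by (rule closure_subset)

lemma non_real_minus_of_real_nonzero:
  assumes "Im z \<noteq> 0"
  shows "z - complex_of_real t \<noteq> 0"
  using assms by (metis Im_complex_of_real right_minus_eq)

lemma has_vector_derivative_inverse_power_shift:
  assumes "Im z \<noteq> 0"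
  shows "((\<lambda>t. c / (z - complex_of_real t) ^ k) has_vector_derivative
           (c * of_nat k / (z - complex_of_real t) ^ Suc k)) (at t)"
proof -
  define u where "u = z - complex_of_real t"
  have u: "u \<noteq> 0"
    unfolding u_def by (rule non_real_minus_of_real_nonzero[OF assms])
  have "- (c * (of_nat k * u ^ (k - 1) * (- 1))) / (u ^ k * u ^ k) = c * of_nat k / u ^ Suc k"
  proof (cases k)
    case (Suc m)
    then have "u ^ k * u ^ k = u ^ Suc k * u ^ m"
      by (simp add: power_add[symmetric])
    with Suc u show ?thesis
      by (simp add: field_simps)
  qed simp
  moreover have "((\<lambda>w. c / (z - w) ^ k) has_field_derivative
      - (c * (of_nat k * u ^ (k - 1) * (- 1))) / (u ^ k * u ^ k)) (at (complex_of_real t))"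
    using u unfolding u_def by (auto intro!: derivative_eq_intros)
  ultimately show ?thesis
    unfolding u_def by (intro has_vector_derivative_real_field) simp
qed

lemma hder_rz:
  assumes "Im z \<noteq> 0"
  shows "hder n (rz z) = (\<lambda>t. fact n / (z - complex_of_real t) ^ Suc n)"
proof (induction n)
  case 0
  then show ?case
    by (simp add: rz_def fun_eq_iff)
next
  case (Suc n)
  have deriv: "((\<lambda>t. fact n / (z - complex_of_real t) ^ Suc n) has_vector_derivative
          fact (Suc n) / (z - complex_of_real t) ^ Suc (Suc n)) (at t)" for t
    using has_vector_derivative_inverse_power_shift[OF assms, of "fact n" "Suc n"]
    by (simp add: algebra_simps)
  show ?case
    unfolding hder.simps Suc.IH by (intro ext vector_derivative_at deriv)
qed

lemma smooth_rz:
  assumes "Im z \<noteq> 0"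
  shows "smooth (rz z)"
  unfolding smooth_def hder_rz[OF assms]
  using has_vector_derivative_inverse_power_shift[OF assms] differentiableI_vector by blast

lemma hder_Suc_minus_of_real:
  "hder (Suc n) (\<lambda>t. z - complex_of_real t) = (\<lambda>t. if n = 0 then -1 else 0)"
proof (induction n)
  case 0
  have "((\<lambda>t. z - complex_of_real t) has_vector_derivative -1) (at t)" for t
    by (auto intro!: derivative_eq_intros has_vector_derivative_real_field)
  then show ?case
    by (simp add: vector_derivative_at)
next
  case (Suc n)
  then show ?case
    by (simp del: hder.simps(2) add: hder.simps(2)[of "Suc n"] vector_derivative_at)
qed

lemma smooth_minus_of_real: "smooth (\<lambda>t. z - complex_of_real t)"
  unfolding smooth_def
proof (intro allI)
  fix n t
  show "hder n (\<lambda>t. z - complex_of_real t) differentiable at t"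
  proof (cases n)
    case 0
    then show ?thesis
      by (auto intro!: differentiableI_vector derivative_eq_intros has_vector_derivative_real_field)
  next
    case (Suc m)
    then show ?thesis
      unfolding Suc hder_Suc_minus_of_real by simp
  qed
qed

lemma in_resolvent_op_closureI:
  assumes sc: "cbanach sc"
    and dense: "closure D = UNIV"
    and B: "bounded_linear B"
    and B_D: "B ` D \<subseteq> D"
    and right_inverse: "\<And>x. x \<in> D \<Longrightarrow> sc z (B x) - a (B x) = x"
    and left_inverse: "\<And>x. x \<in> D \<Longrightarrow> B (sc z x - a x) = x"
  shows "in_resolvent sc (op_closure D a) z"
  unfolding in_resolvent_def
proof (intro exI conjI allI impI)
  show "bounded_linear B"
    by (rule B)
  define f where "f w = (B w, sc z (B w) - w)" for w
  have "continuous_on (closure D) f"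
    unfolding f_def
    by (intro continuous_intros bounded_linear.continuous_on[OF B]
        bounded_linear.continuous_on[OF cbanach_bounded_linear[OF sc]])
  moreover have "f ` D \<subseteq> op_closure D a"
  proof
    fix p assume "p \<in> f ` D"
    then obtain x where x: "x \<in> D" "p = f x"
      by blast
    have "a (B x) = sc z (B x) - x"
      using right_inverse[OF x(1)] by (metis diff_eq_eq add_diff_cancel_left')
    then have "p \<in> graph D a"
      using B_D x unfolding f_def graph_def by force
    then show "p \<in> op_closure D a"
      using graph_subset_op_closure by blast
  qed
  ultimately have "f ` closure D \<subseteq> op_closure D a"
    by (intro image_closure_subset) (auto simp: op_closure_def)
  then show "(B w, sc z (B w) - w) \<in> op_closure D a" for w
    using dense unfolding f_def by auto
next
  fix x y
  have "closed {p. B (sc z (fst p) - snd p) = fst p}"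
    by (intro closed_Collect_eq continuous_intros bounded_linear.continuous_on[OF B]
        bounded_linear.continuous_on[OF cbanach_bounded_linear[OF sc]])
  moreover have "graph D a \<subseteq> {p. B (sc z (fst p) - snd p) = fst p}"
    using left_inverse unfolding graph_def by auto
  ultimately have "op_closure D a \<subseteq> {p. B (sc z (fst p) - snd p) = fst p}"
    unfolding op_closure_def by (rule closure_minimal[rotated])
  then show "(x, y) \<in> op_closure D a \<Longrightarrow> B (sc z x - y) = x"
    by auto
qed

lemma weak_hyperop_in_domain:
  assumes "weak_hyperop sc D a F" "smooth h" "x \<in> D"
  shows "F h x \<in> D"
  using assms unfolding weak_hyperop_def in_LD_def clinear_on_def by blast

lemma weak_hyperop_one:
  assumes "cbanach sc" "weak_hyperop sc D a F" "x \<in> D"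
  shows "F (\<lambda>t. 1) x = x"
proof -
  have "F (\<lambda>t. poly [:1:] (complex_of_real t)) x = poly_op sc [:1:] a x"
    using assms(2,3) unfolding weak_hyperop_def by blast
  then show ?thesis
    by (simp add: poly_op_def cbanach_scale_one[OF assms(1)])
qed

lemma weak_hyperop_minus_of_real:
  assumes "cbanach sc" "weak_hyperop sc D a F" "x \<in> D"
  shows "F (\<lambda>t. z - complex_of_real t) x = sc z x - a x"
proof -
  have "F (\<lambda>t. poly [:z, -1:] (complex_of_real t)) x = poly_op sc [:z, -1:] a x"
    using assms(2,3) unfolding weak_hyperop_def by blast
  then show ?thesis
    by (simp add: poly_op_def cbanach_scale_minus_one[OF assms(1)])
qed

lemma weak_hyperop_reciprocal:
  assumes "cbanach sc" "weak_hyperop sc D a F" "x \<in> D"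
    and "smooth h" "smooth g" "\<And>t. h t * g t = 1"
  shows "F h (F g x) = x"
proof -
  have "F h (F g x) = F (\<lambda>t. h t * g t) x"
    using assms(2-5) unfolding weak_hyperop_def by metis
  also have "\<dots> = x"
    using weak_hyperop_one[OF assms(1-3)] assms(6) by simp
  finally show ?thesis .
qed

lemma weak_hyperop_rz_inverse:
  assumes sc: "cbanach sc" and F: "weak_hyperop sc D a F" and z: "Im z \<noteq> 0" and x: "x \<in> D"
  shows "F (rz z) (sc z x - a x) = x"
    and "sc z (F (rz z) x) - a (F (rz z) x) = x"
proof -
  have inverse: "rz z t * (z - complex_of_real t) = 1" for t
    using non_real_minus_of_real_nonzero[OF z] by (simp add: rz_def)
  have rz_x: "F (rz z) x \<in> D"
    using weak_hyperop_in_domain[OF F smooth_rz[OF z] x] .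
  show "F (rz z) (sc z x - a x) = x"
    using weak_hyperop_reciprocal[OF sc F x smooth_rz[OF z] smooth_minus_of_real inverse]
    by (simp add: weak_hyperop_minus_of_real[OF sc F x])
  show "sc z (F (rz z) x) - a (F (rz z) x) = x"
    using weak_hyperop_reciprocal[OF sc F x smooth_minus_of_real smooth_rz[OF z]] inverse
    by (simp add: mult.commute weak_hyperop_minus_of_real[OF sc F rz_x])
qed

theorem proposition5p7:
  fixes sc :: "complex \<Rightarrow> 'x::banach \<Rightarrow> 'x"
    and D :: "'x set" and a :: "'x \<Rightarrow> 'x"
    and F :: "(real \<Rightarrow> complex) \<Rightarrow> 'x \<Rightarrow> 'x"
  assumes "cbanach sc"
    and "weak_hyperop sc D a F"
    and "\<forall>z. Im z \<noteq> 0 \<longrightarrow>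
           (\<exists>B. bounded_linear B \<and> op_closure D (F (rz z)) = {(x, B x) | x. True})"
  shows "\<forall>z. Im z \<noteq> 0 \<longrightarrow> in_resolvent sc (op_closure D a) z"
proof (intro allI impI)
  fix z :: complex
  assume z: "Im z \<noteq> 0"
  obtain B where B: "bounded_linear B" and graph_B: "op_closure D (F (rz z)) = {(x, B x) | x. True}"
    using assms(3) z by blast
  have rz_eq_B: "F (rz z) x = B x" if "x \<in> D" for x
    using that graph_subset_op_closure[of D "F (rz z)"] unfolding graph_B graph_def by blast
  have "sc z x - a x \<in> D" if "x \<in> D" for x
    using weak_hyperop_in_domain[OF assms(2) smooth_minus_of_real that]
    by (simp add: weak_hyperop_minus_of_real[OF assms(1,2) that])
  moreover have "closure D = UNIV"
    using assms(2) unfolding weak_hyperop_def by blast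
  ultimately show "in_resolvent sc (op_closure D a) z"
    using weak_hyperop_in_domain[OF assms(2) smooth_rz[OF z]]
      weak_hyperop_rz_inverse[OF assms(1,2) z]
    by (intro in_resolvent_op_closureI[OF assms(1) _ B]) (auto simp: rz_eq_B[symmetric])
qed

end
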